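(* Let $r\ge1$ and $f\in H^{r+p(r)}(\mathbb T)$. Then for all $\tau>0$, $$\|P_1^\tau(f)\|_r\le C\tau^2\|f\|_{r+p(r)}^2,$$ with $C$ independent of $\tau$ and $f$, where $$P_1^\tau(f)=\sum_{k\neq0}\sum_{k_1+k_2=k}\frac{k_1^2}{k^2}\int_0^\tau\big(e^{-2isk_2^2}-1\big)\big(e^{-2iskk_1}-1\big)ds\,\widehat{\bar f}_{k_1}\widehat{\bar f}_{k_2}e^{ikx}.$$
   Context: $\mathbb{T}=[-\pi,\pi]$ periodic; $\widehat f_k=\frac1{2\pi}\int_{\mathbb T}f(x)e^{-ikx}dx$; $\|f\|_s^2=\sum_k(1+k^2)^s|\widehat f_k|^2$ is the $H^s$ norm; $\bar f$ is the complex conjugate. The function $p$ on $[1,\infty)$: $p(1)=1$; $p(r)=(3-2r)+$ for $1<r\le7/6$; $p(r)=2/3$ for $7/6<r\le17/12$; $p(r)=(7/2-2r)+$ for $17/12<r\le3/2$; $p(r)=5/4-r/2$ for $3/2<r<5/2$; $p(5/2)=0+$; $p(r)=0$ for $r>5/2$. Here $c+$ means: the statement holds with $c+\varepsilon$ in place of $p(r)$ for every sufficiently small $\varepsilon>0$ (the constant may then depend on $\varepsilon$). *)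

theory Defs
  imports "HOL-Analysis.Analysis"
begin

definition fourier_coeff :: "(real \<Rightarrow> complex) \<Rightarrow> int \<Rightarrow> complex" where
  "fourier_coeff f k =
     complex_of_real (1 / (2 * pi)) *
       (LINT x:{-pi..pi}|lborel. f x * exp (- \<i> * of_int k * complex_of_real x))"

definition sob_sq :: "real \<Rightarrow> (int \<Rightarrow> complex) \<Rightarrow> real" where
  "sob_sq s c = (\<Sum>\<^sub>\<infinity>k\<in>(UNIV::int set). (1 + (of_int k)^2) powr s * (cmod (c k))^2)"

definition in_H :: "real \<Rightarrow> (int \<Rightarrow> complex) \<Rightarrow> bool" where
  "in_H s c \<longleftrightarrow> (\<lambda>k. (1 + (of_int k)^2) powr s * (cmod (c k))^2) summable_on (UNIV::int set)"

definition sob_norm :: "real \<Rightarrow> (int \<Rightarrow> complex) \<Rightarrow> real" where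
  "sob_norm s c = sqrt (sob_sq s c)"

text \<open>The k-th Fourier coefficient of P_1^tau(f), where g = the Fourier
  coefficients of conj f.\<close>
definition P1_coeff :: "real \<Rightarrow> (int \<Rightarrow> complex) \<Rightarrow> int \<Rightarrow> complex" where
  "P1_coeff \<tau> g k =
    (if k = 0 then 0 else
      (\<Sum>\<^sub>\<infinity>k1\<in>(UNIV::int set).
         complex_of_real ((of_int k1)^2 / (of_int k)^2) *
         integral {0..\<tau>} (\<lambda>s::real.
            (exp (- 2 * \<i> * complex_of_real s * of_int ((k - k1)^2)) - 1) *
            (exp (- 2 * \<i> * complex_of_real s * of_int (k * k1)) - 1)) *
         g k1 * g (k - k1)))"

text \<open>The exponent p(r) without the "+" and the flag telling whether it carries a "+".\<close>
definition p_base :: "real \<Rightarrow> real" where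
  "p_base r =
    (if r = 1 then 1
     else if 1 < r \<and> r \<le> 7/6 then 3 - 2*r
     else if 7/6 < r \<and> r \<le> 17/12 then 2/3
     else if 17/12 < r \<and> r \<le> 3/2 then 7/2 - 2*r
     else if 3/2 < r \<and> r < 5/2 then 5/4 - r/2
     else 0)"

definition p_plus :: "real \<Rightarrow> bool" where
  "p_plus r \<longleftrightarrow> (1 < r \<and> r \<le> 7/6) \<or> (17/12 < r \<and> r \<le> 3/2) \<or> r = 5/2"

definition P1_estimate :: "real \<Rightarrow> real \<Rightarrow> bool" where
  "P1_estimate r s \<longleftrightarrow>
    (\<exists>C. \<forall>(f::real \<Rightarrow> complex) (\<tau>::real).
       set_integrable lborel {-pi..pi} f \<and> in_H s (fourier_coeff f) \<and> 0 < \<tau> \<longrightarrow>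
         in_H r (P1_coeff \<tau> (fourier_coeff (\<lambda>x. cnj (f x)))) \<and>
         sob_norm r (P1_coeff \<tau> (fourier_coeff (\<lambda>x. cnj (f x))))
           \<le> C * \<tau>^2 * (sob_norm s (fourier_coeff f))^2)"

end

theory Submission
  imports Defs
begin

text \<open>Write \<open><j> = 1 + |j|\<close> and \<open>b j = (1 + j^2)^(s/2) |g j|\<close> for the coefficients \<open>g\<close> of
  \<open>conj f\<close>. The phase integral is at most \<open>4 \<tau>^2 min ((k - k1)^2, |k k1|)\<close>, so
  \<open><k>^r |P_1(k)| \<le> C \<tau>^2 \<Sum>k1. K(k,k1) b(k1) b(k - k1)\<close> with the nonnegative kernel
  \<open>K(k,k1) = <k>^r k1^2/k^2 min ((k - k1)^2, |k k1|) / (<k1>^s <k - k1>^s)\<close>. Cauchy--Schwarz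
  in \<open>k1\<close> and Young's inequality for \<open>b^2 * b^2\<close> then bound \<open>\<parallel>P_1\<parallel>_r^2\<close> by
  \<open>C \<tau>^4 (sup k. \<Sum>k1. K(k,k1)^2) \<parallel>f\<parallel>_s^4\<close>. According to which of \<open>|k1|\<close>, \<open>|k - k1|\<close> is the
  largest frequency, \<open>K^2\<close> is dominated by \<open><k>^e <j>^g\<close> with \<open>j\<close> ranging over \<open>|j| \<le> 2|k|\<close> or
  over \<open>|j| > |k|\<close>, and these sums are bounded uniformly in \<open>k\<close> as soon as \<open>r \<le> s\<close>,
  \<open>2r + 5 \<le> 4s\<close>, \<open>s > 7/4\<close> and \<open>s \<noteq> 5/2\<close>. The exponent \<open>s = r + p(r)\<close> (plus \<open>\<epsilon>\<close>
  where \<open>p(r)\<close> carries a \<open>+\<close>) meets these conditions in every range of \<open>r\<close>.\<close>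

section \<open>Phase integrals\<close>

lemma norm_exp_i_minus_1_le_abs: "norm (exp (\<i> * of_real t) - 1) \<le> \<bar>t\<bar>"
  using abs_sin_x_le_abs_x[of "t/2"] by (simp add: dist_exp_i_1)

lemma norm_exp_i_minus_1_le_2: "norm (exp (\<i> * of_real t) - 1) \<le> 2"
  using abs_sin_le_one[of "t/2"] by (simp add: dist_exp_i_1)

lemma phase_integral_bound:
  fixes a b \<tau> :: real
  assumes "0 \<le> \<tau>"
  shows "norm (integral {0..\<tau>} (\<lambda>s. (exp (- 2 * \<i> * of_real s * of_real a) - 1) *
                                        (exp (- 2 * \<i> * of_real s * of_real b) - 1)))
         \<le> 4 * \<tau>^2 * min \<bar>a\<bar> \<bar>b\<bar>"
proof -
  have factor: "norm (exp (- 2 * \<i> * of_real s * of_real c) - 1) \<le> min (2 * \<tau> * \<bar>c\<bar>) 2"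
    if "s \<in> {0..\<tau>}" for s c :: real
  proof -
    have eq: "- 2 * \<i> * of_real s * of_real c = \<i> * of_real (- 2 * s * c)" by simp
    have "\<bar>- 2 * s * c\<bar> \<le> 2 * \<tau> * \<bar>c\<bar>"
      using that by (simp add: abs_mult mult_right_mono)
    then have "norm (exp (\<i> * of_real (- 2 * s * c)) - 1) \<le> min (2 * \<tau> * \<bar>c\<bar>) 2"
      using norm_exp_i_minus_1_le_abs[of "- 2 * s * c"] norm_exp_i_minus_1_le_2[of "- 2 * s * c"]
      by linarith
    then show ?thesis by (simp only: eq)
  qed
  have "norm ((exp (- 2 * \<i> * of_real s * of_real a) - 1) * (exp (- 2 * \<i> * of_real s * of_real b) - 1))
          \<le> 4 * \<tau> * min \<bar>a\<bar> \<bar>b\<bar>" if "s \<in> {0..\<tau>}" for s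
  proof -
    let ?na = "norm (exp (- 2 * \<i> * of_real s * of_real a) - 1)"
    let ?nb = "norm (exp (- 2 * \<i> * of_real s * of_real b) - 1)"
    have bounds: "?na \<le> 2 * \<tau> * \<bar>a\<bar>" "?na \<le> 2" "?nb \<le> 2 * \<tau> * \<bar>b\<bar>" "?nb \<le> 2" "0 \<le> \<tau>"
      using factor[OF that, of a] factor[OF that, of b] that by auto
    have "?na * ?nb \<le> (2 * \<tau> * \<bar>a\<bar>) * 2"
      using bounds by (intro mult_mono) auto
    moreover have "?na * ?nb \<le> 2 * (2 * \<tau> * \<bar>b\<bar>)"
      using bounds by (intro mult_mono) auto
    ultimately show ?thesis by (simp add: norm_mult)
  qed
  then have "norm (integral {0..\<tau>} (\<lambda>s. (exp (- 2 * \<i> * of_real s * of_real a) - 1) *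
                                        (exp (- 2 * \<i> * of_real s * of_real b) - 1)))
         \<le> 4 * \<tau> * min \<bar>a\<bar> \<bar>b\<bar> * (\<tau> - 0)"
    using assms by (intro integral_bound continuous_intros) auto
  then show ?thesis by (simp add: power2_eq_square mult_ac)
qed

section \<open>Power sums\<close>

lemma powr_le_succ_powr_diff:
  fixes x g :: real
  assumes "0 < x" "g \<le> 0" "g \<noteq> -1"
  shows "(x + 1) powr g \<le> ((x + 1) powr (1 + g) - x powr (1 + g)) / (1 + g)"
proof -
  have deriv: "((\<lambda>z. z powr (1 + g)) has_real_derivative (1 + g) * z powr g) (at z)" if "0 < z" for z
    using has_real_derivative_powr[OF that, of "1 + g"] by simp
  have "continuous_on {x..x + 1} (\<lambda>z. z powr (1 + g))"
    using assms(1) by (intro continuous_on_powr continuous_intros) auto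
  moreover have "(\<lambda>z. z powr (1 + g)) differentiable (at z)" if "x < z" for z
    using deriv[of z] that assms(1) real_differentiable_def by auto
  ultimately obtain z l where z: "x < z" "z < x + 1" "((\<lambda>z. z powr (1 + g)) has_real_derivative l) (at z)"
    and diff: "(x + 1) powr (1 + g) - x powr (1 + g) = (x + 1 - x) * l"
    using MVT[of x "x + 1" "\<lambda>z. z powr (1 + g)"] by auto
  have "l = (1 + g) * z powr g"
    using DERIV_unique[OF z(3) deriv] z(1) assms(1) by auto
  then have "((x + 1) powr (1 + g) - x powr (1 + g)) / (1 + g) = z powr g"
    using diff assms(3) by simp
  moreover have "(x + 1) powr g \<le> z powr g"
    using z assms by (intro powr_mono2') auto
  ultimately show ?thesis by simp
qed

lemma sum_powr_le_telescope:
  fixes g :: real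
  assumes "g \<le> 0" "g \<noteq> -1" "m \<le> Suc n" "0 < m \<or> -1 < g"
  shows "(\<Sum>i=m..n. (real i + 1) powr g) \<le> ((real n + 1) powr (1 + g) - real m powr (1 + g)) / (1 + g)"
proof -
  define F where "F i = real i powr (1 + g) / (1 + g)" for i
  have "(real i + 1) powr g \<le> F (Suc i) - F i" if "i \<in> {m..n}" for i
  proof (cases "i = 0")
    case True
    then have "-1 < g" using that assms(4) by auto
    then show ?thesis using True assms(1) by (simp add: F_def divide_simps)
  next
    case False
    then show ?thesis
      using powr_le_succ_powr_diff[of "real i" g] assms(1,2)
      by (simp add: F_def diff_divide_distrib add.commute)
  qed
  then have "(\<Sum>i=m..n. (real i + 1) powr g) \<le> (\<Sum>i=m..n. F (Suc i) - F i)"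
    by (rule sum_mono)
  also have "\<dots> = F (Suc n) - F m"
    using assms(3) by (rule sum_Suc_diff)
  finally show ?thesis by (simp add: F_def diff_divide_distrib add.commute)
qed

lemma sum_powr_le_of_gt_minus_1:
  fixes g :: real
  assumes "-1 < g"
  shows "(\<Sum>i=0..n. (real i + 1) powr g) \<le> (real n + 1) powr (1 + g) / min 1 (1 + g)"
proof (cases "0 \<le> g")
  case True
  have "(\<Sum>i=0..n. (real i + 1) powr g) \<le> (\<Sum>i=0..n. (real n + 1) powr g)"
    using True by (intro sum_mono powr_mono2) auto
  also have "\<dots> = (real n + 1) powr (1 + g)"
    by (simp add: powr_add)
  finally show ?thesis
    using True by simp
next
  case False
  then show ?thesis
    using sum_powr_le_telescope[of g 0 n] assms by (simp add: min_def)
qed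

lemma sum_powr_le_of_lt_minus_1:
  fixes g :: real
  assumes "g < -1"
  shows "(\<Sum>i=0..n. (real i + 1) powr g) \<le> 1 + 1 / (-1 - g)"
proof -
  have "(\<Sum>i=1..n. (real i + 1) powr g) \<le> ((real n + 1) powr (1 + g) - 1) / (1 + g)"
    using sum_powr_le_telescope[of g 1 n] assms by simp
  also have "\<dots> = (1 - (real n + 1) powr (1 + g)) / (-1 - g)"
    using assms by (simp add: field_simps)
  also have "\<dots> \<le> 1 / (-1 - g)"
    using assms by (intro divide_right_mono) auto
  finally have "(\<Sum>i=1..n. (real i + 1) powr g) \<le> 1 / (-1 - g)" .
  moreover have "(\<Sum>i=0..n. (real i + 1) powr g) = 1 + (\<Sum>i=1..n. (real i + 1) powr g)"
    by (simp add: sum.atLeast_Suc_atMost)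
  ultimately show ?thesis
    by simp
qed

lemma sum_powr_le_card:
  fixes g :: real
  assumes "g \<le> 0"
  shows "(\<Sum>i=0..n. (real i + 1) powr g) \<le> real n + 1"
proof -
  have "(\<Sum>i=0..n. (real i + 1) powr g) \<le> (\<Sum>i=0..n. 1)"
    using assms powr_mono[of g 0] by (intro sum_mono) auto
  then show ?thesis by simp
qed

definition bracket :: "int \<Rightarrow> real" where
  "bracket j = 1 + \<bar>of_int j\<bar>"

lemma bracket_ge_1: "1 \<le> bracket j"
  by (simp add: bracket_def)

lemma bracket_pos [simp]: "0 < bracket j"
  and bracket_nonneg [simp]: "0 \<le> bracket j"
  and bracket_nonzero [simp]: "bracket j \<noteq> 0"
  using bracket_ge_1[of j] by auto

lemma bracket_le_double:
  assumes "\<bar>k\<bar> \<le> 2 * \<bar>j\<bar>"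
  shows "bracket k \<le> 2 * bracket j"
proof -
  have "of_int \<bar>k\<bar> \<le> (of_int (2 * \<bar>j\<bar>) :: real)"
    using assms by (simp only: of_int_le_iff)
  then show ?thesis by (simp add: bracket_def)
qed

lemma sum_bracket_powr_le_nat_sum:
  fixes G :: "int set" and a N :: int
  assumes "finite G" "\<And>j. j \<in> G \<Longrightarrow> a \<le> \<bar>j\<bar> \<and> \<bar>j\<bar> \<le> N" "0 \<le> a" "0 \<le> N"
  shows "(\<Sum>j\<in>G. bracket j powr g) \<le> 2 * (\<Sum>i=nat a..nat N. (real i + 1) powr g)"
proof -
  define A where "A = {a..N}"
  have "G \<subseteq> A \<union> uminus ` A"
  proof
    fix j assume "j \<in> G"
    then have "a \<le> \<bar>j\<bar>" "\<bar>j\<bar> \<le> N" using assms(2) by auto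
    then show "j \<in> A \<union> uminus ` A"
      unfolding A_def by (cases "0 \<le> j") (auto intro!: image_eqI[of _ _ "- j"])
  qed
  then have "(\<Sum>j\<in>G. bracket j powr g) \<le> (\<Sum>j\<in>A \<union> uminus ` A. bracket j powr g)"
    by (intro sum_mono2) (auto simp: A_def)
  also have "\<dots> \<le> (\<Sum>j\<in>A. bracket j powr g) + (\<Sum>j\<in>uminus ` A. bracket j powr g)"
    by (subst sum_Un) (auto simp: A_def intro!: sum_nonneg)
  also have "(\<Sum>j\<in>uminus ` A. bracket j powr g) = (\<Sum>j\<in>A. bracket j powr g)"
    by (subst sum.reindex) (auto simp: bracket_def)
  also have "(\<Sum>j\<in>A. bracket j powr g) = (\<Sum>i=nat a..nat N. (real i + 1) powr g)"
  proof -
    have "A = int ` {nat a..nat N}"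
      unfolding A_def using assms(3,4) by (simp add: image_int_atLeastAtMost)
    then show ?thesis by (simp add: sum.reindex bracket_def add.commute)
  qed
  finally show ?thesis by simp
qed

text \<open>The last alternative covers \<open>g = -1\<close>, where the sum grows logarithmically; it is
  then simply bounded by its number of terms.\<close>
lemma powr_mult_sum_powr_bounded:
  fixes e g :: real
  assumes "(-1 < g \<and> e + 1 + g \<le> 0) \<or> (g < -1 \<and> e \<le> 0) \<or> (g \<le> 0 \<and> e + 1 \<le> 0)"
  obtains C where "\<And>n L. 1 \<le> L \<Longrightarrow> real n + 1 \<le> 2 * L \<Longrightarrow>
                     L powr e * (\<Sum>i=0..n. (real i + 1) powr g) \<le> C"
proof -
  consider "-1 < g" "e + 1 + g \<le> 0" | "g < -1" "e \<le> 0" | "g \<le> 0" "e + 1 \<le> 0"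
    using assms by blast
  then show ?thesis
  proof cases
    case 1
    show ?thesis
    proof (rule that[of "2 powr (1 + g) / min 1 (1 + g)"])
      fix n L assume L: "1 \<le> L" "real n + 1 \<le> 2 * L"
      have "L powr e * (real n + 1) powr (1 + g) \<le> L powr e * (2 * L) powr (1 + g)"
        using L 1 by (intro mult_left_mono powr_mono2) auto
      also have "\<dots> = 2 powr (1 + g) * L powr (e + 1 + g)"
        using L by (simp add: powr_mult powr_add add.assoc)
      also have "\<dots> \<le> 2 powr (1 + g)"
        using L 1 powr_mono[of "e + 1 + g" 0 L] by simp
      finally have "L powr e * (real n + 1) powr (1 + g) / min 1 (1 + g) \<le> 2 powr (1 + g) / min 1 (1 + g)"
        using 1 by (intro divide_right_mono) auto
      then show "L powr e * (\<Sum>i=0..n. (real i + 1) powr g) \<le> 2 powr (1 + g) / min 1 (1 + g)"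
        using sum_powr_le_of_gt_minus_1[OF 1(1), of n] mult_left_mono[of _ _ "L powr e"] by fastforce
    qed
  next
    case 2
    show ?thesis
    proof (rule that[of "1 + 1 / (-1 - g)"])
      fix n L assume L: "1 \<le> L" "real n + 1 \<le> 2 * L"
      have "L powr e \<le> 1"
        using L(1) 2 powr_mono[of e 0 L] by simp
      then have "L powr e * (\<Sum>i=0..n. (real i + 1) powr g) \<le> 1 * (1 + 1 / (-1 - g))"
        using sum_powr_le_of_lt_minus_1[OF 2(1)] by (intro mult_mono) (auto intro: sum_nonneg)
      then show "L powr e * (\<Sum>i=0..n. (real i + 1) powr g) \<le> 1 + 1 / (-1 - g)"
        by simp
    qed
  next
    case 3
    show ?thesis
    proof (rule that[of 2])
      fix n L assume L: "1 \<le> L" "real n + 1 \<le> 2 * L"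
      have "L powr e * (\<Sum>i=0..n. (real i + 1) powr g) \<le> L powr e * (2 * L)"
        using order_trans[OF sum_powr_le_card[OF 3(1)] L(2)] by (intro mult_left_mono) auto
      also have "\<dots> = 2 * L powr (e + 1)"
        using L by (simp add: powr_add)
      also have "\<dots> \<le> 2"
        using L(1) 3 powr_mono[of "e + 1" 0 L] by simp
      finally show "L powr e * (\<Sum>i=0..n. (real i + 1) powr g) \<le> 2" .
    qed
  qed
qed

definition near_weight :: "real \<Rightarrow> real \<Rightarrow> int \<Rightarrow> int \<Rightarrow> real" where
  "near_weight e g k j = (if \<bar>j\<bar> \<le> 2 * \<bar>k\<bar> then bracket k powr e * bracket j powr g else 0)"

definition far_weight :: "real \<Rightarrow> real \<Rightarrow> int \<Rightarrow> int \<Rightarrow> real" where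
  "far_weight e g k j = (if \<bar>k\<bar> < \<bar>j\<bar> then bracket k powr e * bracket j powr g else 0)"

lemma near_weight_nonneg: "0 \<le> near_weight e g k j"
  and far_weight_nonneg: "0 \<le> far_weight e g k j"
  by (simp_all add: near_weight_def far_weight_def)

lemma sum_near_weight_bounded:
  assumes "(-1 < g \<and> e + 1 + g \<le> 0) \<or> (g < -1 \<and> e \<le> 0) \<or> (g \<le> 0 \<and> e + 1 \<le> 0)"
  obtains B where "\<And>k G. finite G \<Longrightarrow> (\<Sum>j\<in>G. near_weight e g k j) \<le> B"
proof -
  obtain C where C: "\<And>n L. 1 \<le> L \<Longrightarrow> real n + 1 \<le> 2 * L \<Longrightarrow>
                           L powr e * (\<Sum>i=0..n. (real i + 1) powr g) \<le> C"
    using powr_mult_sum_powr_bounded[OF assms] by blast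
  show ?thesis
  proof (rule that[of "2 * C"])
    fix k :: int and G :: "int set"
    assume G: "finite G"
    let ?G = "{j\<in>G. \<bar>j\<bar> \<le> 2 * \<bar>k\<bar>}"
    have "(\<Sum>j\<in>G. near_weight e g k j) = (\<Sum>j\<in>?G. bracket k powr e * bracket j powr g)"
      using G by (simp add: near_weight_def sum.inter_filter)
    also have "\<dots> = bracket k powr e * (\<Sum>j\<in>?G. bracket j powr g)"
      by (simp add: sum_distrib_left)
    also have "\<dots> \<le> bracket k powr e * (2 * (\<Sum>i=nat 0..nat (2 * \<bar>k\<bar>). (real i + 1) powr g))"
      using G by (intro mult_left_mono sum_bracket_powr_le_nat_sum) auto
    also have "\<dots> = 2 * (bracket k powr e * (\<Sum>i=0..nat (2 * \<bar>k\<bar>). (real i + 1) powr g))"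
      by simp
    also have "\<dots> \<le> 2 * C"
      using C[OF bracket_ge_1, of "nat (2 * \<bar>k\<bar>)" k] by (simp add: bracket_def)
    finally show "(\<Sum>j\<in>G. near_weight e g k j) \<le> 2 * C" .
  qed
qed

lemma sum_far_weight_bounded:
  assumes "g < -1" "e + 1 + g \<le> 0"
  obtains B where "\<And>k G. finite G \<Longrightarrow> (\<Sum>j\<in>G. far_weight e g k j) \<le> B"
proof (rule that[of "2 / (-1 - g)"])
  fix k :: int and G :: "int set"
  assume G: "finite G"
  let ?G = "{j\<in>G. \<bar>k\<bar> < \<bar>j\<bar>}"
  define N where "N = Max (insert (\<bar>k\<bar> + 1) (abs ` G))"
  have N: "\<bar>k\<bar> + 1 \<le> N" "\<And>j. j \<in> G \<Longrightarrow> \<bar>j\<bar> \<le> N"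
    unfolding N_def using G by (auto intro: Max_ge)
  have tail: "(\<Sum>i=nat (\<bar>k\<bar> + 1)..nat N. (real i + 1) powr g) \<le> bracket k powr (1 + g) / (-1 - g)"
  proof -
    have "(\<Sum>i=nat (\<bar>k\<bar> + 1)..nat N. (real i + 1) powr g)
          \<le> ((real (nat N) + 1) powr (1 + g) - real (nat (\<bar>k\<bar> + 1)) powr (1 + g)) / (1 + g)"
      using assms N(1) by (intro sum_powr_le_telescope) auto
    also have "\<dots> = (bracket k powr (1 + g) - (real (nat N) + 1) powr (1 + g)) / (-1 - g)"
      using assms(1) by (simp add: bracket_def field_simps)
    also have "\<dots> \<le> bracket k powr (1 + g) / (-1 - g)"
      using assms(1) by (intro divide_right_mono) auto
    finally show ?thesis .
  qed
  have "(\<Sum>j\<in>G. far_weight e g k j) = (\<Sum>j\<in>?G. bracket k powr e * bracket j powr g)"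
    using G by (simp add: far_weight_def sum.inter_filter)
  also have "\<dots> = bracket k powr e * (\<Sum>j\<in>?G. bracket j powr g)"
    by (simp add: sum_distrib_left)
  also have "\<dots> \<le> bracket k powr e * (2 * (\<Sum>i=nat (\<bar>k\<bar> + 1)..nat N. (real i + 1) powr g))"
    using G N by (intro mult_left_mono sum_bracket_powr_le_nat_sum) auto
  also have "\<dots> \<le> bracket k powr e * (2 * (bracket k powr (1 + g) / (-1 - g)))"
    using tail by (intro mult_left_mono) auto
  also have "\<dots> = 2 / (-1 - g) * bracket k powr (e + 1 + g)"
    by (simp add: powr_add add.assoc)
  also have "\<dots> \<le> 2 / (-1 - g)"
    using assms bracket_ge_1[of k] powr_mono[of "e + 1 + g" 0 "bracket k"]
    by (intro mult_left_le) auto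
  finally show "(\<Sum>j\<in>G. far_weight e g k j) \<le> 2 / (-1 - g)" .
qed

section \<open>The kernel\<close>

text \<open>By \<open>phase_integral_bound\<close>, \<open>4 \<tau>^2 multiplier k k1\<close> bounds the modulus of the coefficient of
  \<open>g k1 g (k - k1)\<close> in \<open>P1_coeff \<tau> g k\<close>. Division by zero makes it vanish at \<open>k = 0\<close>.\<close>
definition multiplier :: "int \<Rightarrow> int \<Rightarrow> real" where
  "multiplier k k1 = (of_int k1)^2 / (of_int k)^2 * min ((of_int (k - k1))^2) \<bar>of_int (k * k1)\<bar>"

lemma multiplier_nonneg: "0 \<le> multiplier k k1"
  by (simp add: multiplier_def)

lemma multiplier_zero_left [simp]: "multiplier 0 k1 = 0"
  by (simp add: multiplier_def)

lemma multiplier_le_cube: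
  assumes "k \<noteq> 0"
  shows "multiplier k k1 \<le> 2 * bracket k1 ^ 3 / bracket k"
proof -
  define u where "u = \<bar>real_of_int k1\<bar>"
  define w where "w = \<bar>real_of_int k\<bar>"
  have w: "1 \<le> w" using assms unfolding w_def by linarith
  have "multiplier k k1 \<le> u^2 / w^2 * (w * u)"
    unfolding multiplier_def u_def w_def power2_abs by (intro mult_left_mono) (auto simp: abs_mult)
  also have "\<dots> = u^3 / w"
    using w by (simp add: power2_eq_square power3_eq_cube)
  also have "\<dots> \<le> (1 + u)^3 * (2 / (1 + w))"
  proof -
    have "u^3 \<le> (1 + u)^3" by (intro power_mono) (auto simp: u_def)
    moreover have "1 / w \<le> 2 / (1 + w)" using w by (simp add: divide_simps)
    ultimately have "u^3 * (1 / w) \<le> (1 + u)^3 * (2 / (1 + w))"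
      using w by (intro mult_mono) (auto simp: u_def)
    then show ?thesis by simp
  qed
  also have "\<dots> = 2 * bracket k1 ^ 3 / bracket k"
    by (simp add: bracket_def u_def w_def)
  finally show ?thesis .
qed

lemma multiplier_le_square:
  assumes "k \<noteq> 0" "\<bar>k1\<bar> \<le> 2 * \<bar>k\<bar>"
  shows "multiplier k k1 \<le> 4 * bracket (k - k1) ^ 2"
proof -
  define u where "u = \<bar>real_of_int k1\<bar>"
  define v where "v = \<bar>real_of_int (k - k1)\<bar>"
  define w where "w = \<bar>real_of_int k\<bar>"
  have w: "1 \<le> w" using assms unfolding w_def by linarith
  have uw: "u \<le> 2 * w" using assms unfolding u_def w_def by linarith
  have "multiplier k k1 \<le> u^2 / w^2 * v^2"
    unfolding multiplier_def u_def w_def v_def power2_abs by (intro mult_left_mono) auto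
  also have "\<dots> \<le> 4 * v^2"
  proof -
    have "u^2 \<le> (2 * w)^2" using uw by (intro power_mono) (auto simp: u_def)
    then have "u^2 / w^2 \<le> 4" using w by (simp add: divide_simps power_mult_distrib)
    then show ?thesis by (intro mult_right_mono) auto
  qed
  also have "\<dots> \<le> 4 * (1 + v)^2"
    by (intro mult_left_mono power_mono) (auto simp: v_def)
  also have "\<dots> = 4 * bracket (k - k1) ^ 2"
    by (simp add: bracket_def v_def)
  finally show ?thesis .
qed

definition P1_kernel :: "real \<Rightarrow> real \<Rightarrow> int \<Rightarrow> int \<Rightarrow> real" where
  "P1_kernel r s k k1 =
     bracket k powr r * multiplier k k1 / (bracket k1 powr s * bracket (k - k1) powr s)"

lemma P1_kernel_nonneg: "0 \<le> P1_kernel r s k k1"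
  by (simp add: P1_kernel_def multiplier_nonneg)

lemma inverse_powr_le_of_le_double:
  fixes x y s :: real
  assumes "0 < x" "0 < y" "0 \<le> s" "x \<le> 2 * y"
  shows "1 / y powr s \<le> 2 powr s / x powr s"
proof -
  have "x powr s \<le> (2 * y) powr s"
    using assms by (intro powr_mono2) auto
  then have "x powr s \<le> 2 powr s * y powr s"
    using assms by (simp add: powr_mult)
  then show ?thesis
    using assms by (simp add: field_simps)
qed

lemma P1_kernel_le_high_low:
  assumes "k \<noteq> 0" "0 \<le> s" "\<bar>k - k1\<bar> \<le> \<bar>k1\<bar>" "\<bar>k1\<bar> \<le> 2 * \<bar>k\<bar>"
  shows "P1_kernel r s k k1 \<le> 4 * 2 powr s * bracket k powr (r - s) * bracket (k - k1) powr (2 - s)"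
proof -
  have "\<bar>k\<bar> \<le> \<bar>k1\<bar> + \<bar>k - k1\<bar>"
    using abs_triangle_ineq[of k1 "k - k1"] by simp
  then have inv: "1 / bracket k1 powr s \<le> 2 powr s / bracket k powr s"
    using assms by (intro inverse_powr_le_of_le_double bracket_le_double) auto
  have M: "multiplier k k1 \<le> 4 * bracket (k - k1) ^ 2"
    using assms by (intro multiplier_le_square)
  have "P1_kernel r s k k1
        = bracket k powr r * multiplier k k1 * (1 / bracket k1 powr s) / bracket (k - k1) powr s"
    by (simp add: P1_kernel_def)
  also have "\<dots> \<le> bracket k powr r * (4 * bracket (k - k1) ^ 2) * (2 powr s / bracket k powr s)
                   / bracket (k - k1) powr s"
    using M inv by (intro divide_right_mono mult_mono mult_left_mono) (auto simp: multiplier_nonneg)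
  also have "\<dots> = 4 * 2 powr s * bracket k powr (r - s) * bracket (k - k1) powr (2 - s)"
    by (simp add: powr_diff field_simps)
  finally show ?thesis .
qed

lemma P1_kernel_le_low_high:
  assumes "k \<noteq> 0" "0 \<le> s" "\<bar>k1\<bar> < \<bar>k - k1\<bar>" "\<bar>k - k1\<bar> \<le> 2 * \<bar>k\<bar>"
  shows "P1_kernel r s k k1 \<le> 2 * 2 powr s * bracket k powr (r - s - 1) * bracket k1 powr (3 - s)"
proof -
  have "\<bar>k\<bar> \<le> \<bar>k1\<bar> + \<bar>k - k1\<bar>"
    using abs_triangle_ineq[of k1 "k - k1"] by simp
  then have inv: "1 / bracket (k - k1) powr s \<le> 2 powr s / bracket k powr s"
    using assms by (intro inverse_powr_le_of_le_double bracket_le_double) auto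
  have M: "multiplier k k1 \<le> 2 * bracket k1 ^ 3 / bracket k"
    using assms by (intro multiplier_le_cube)
  have "P1_kernel r s k k1
        = bracket k powr r * multiplier k k1 * (1 / bracket (k - k1) powr s) / bracket k1 powr s"
    by (simp add: P1_kernel_def)
  also have "\<dots> \<le> bracket k powr r * (2 * bracket k1 ^ 3 / bracket k) * (2 powr s / bracket k powr s)
                   / bracket k1 powr s"
    using M inv by (intro divide_right_mono mult_mono mult_left_mono) (auto simp: multiplier_nonneg)
  also have "\<dots> = 2 * 2 powr s * bracket k powr (r - s - 1) * bracket k1 powr (3 - s)"
    by (simp add: powr_diff powr_add field_simps)
  finally show ?thesis .
qed

lemma P1_kernel_le_high_high:
  assumes "k \<noteq> 0" "0 \<le> s" "\<bar>k\<bar> < \<bar>k1\<bar>" "\<bar>k1\<bar> \<le> 2 * \<bar>k - k1\<bar>"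
  shows "P1_kernel r s k k1 \<le> 2 * 2 powr s * bracket k powr (r - 1) * bracket k1 powr (3 - 2 * s)"
proof -
  have inv: "1 / bracket (k - k1) powr s \<le> 2 powr s / bracket k1 powr s"
    using assms by (intro inverse_powr_le_of_le_double bracket_le_double) auto
  have M: "multiplier k k1 \<le> 2 * bracket k1 ^ 3 / bracket k"
    using assms by (intro multiplier_le_cube)
  have "P1_kernel r s k k1
        = bracket k powr r * multiplier k k1 * (1 / bracket (k - k1) powr s) / bracket k1 powr s"
    by (simp add: P1_kernel_def)
  also have "\<dots> \<le> bracket k powr r * (2 * bracket k1 ^ 3 / bracket k) * (2 powr s / bracket k1 powr s)
                   / bracket k1 powr s"
    using M inv by (intro divide_right_mono mult_mono mult_left_mono) (auto simp: multiplier_nonneg)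
  also have "\<dots> = 2 * 2 powr s * bracket k powr (r - 1) * bracket k1 powr (3 - 2 * s)"
    by (simp add: powr_diff powr_add[symmetric] field_simps)
  finally show ?thesis .
qed

lemma power2_le_powr_mult:
  fixes x c a b p q :: real
  assumes "0 \<le> x" "x \<le> c * a powr p * b powr q" "0 < a" "0 < b"
  shows "x^2 \<le> c^2 * a powr (2 * p) * b powr (2 * q)"
proof -
  have "x^2 \<le> (c * a powr p * b powr q)^2"
    using assms by (intro power_mono) auto
  also have "\<dots> = c^2 * a powr (2 * p) * b powr (2 * q)"
    using assms by (simp add: power_mult_distrib powr_power)
  finally show ?thesis .
qed

lemma frequency_trichotomy:
  fixes k k1 :: int
  shows "(\<bar>k - k1\<bar> \<le> \<bar>k1\<bar> \<and> \<bar>k1\<bar> \<le> 2 * \<bar>k\<bar>)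
         \<or> (\<bar>k1\<bar> < \<bar>k - k1\<bar> \<and> \<bar>k - k1\<bar> \<le> 2 * \<bar>k\<bar>)
         \<or> (\<bar>k\<bar> < \<bar>k1\<bar> \<and> \<bar>k1\<bar> \<le> 2 * \<bar>k - k1\<bar>)"
proof -
  have "(v \<le> u \<and> u \<le> 2 * w) \<or> (u < v \<and> v \<le> 2 * w) \<or> (w < u \<and> u \<le> 2 * v)"
    if "w \<le> u + v" "v \<le> w + u" "u \<le> w + v" for u v w :: int
    using that by linarith
  moreover have "\<bar>k\<bar> \<le> \<bar>k1\<bar> + \<bar>k - k1\<bar>" "\<bar>k - k1\<bar> \<le> \<bar>k\<bar> + \<bar>k1\<bar>" "\<bar>k1\<bar> \<le> \<bar>k\<bar> + \<bar>k - k1\<bar>"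
    using abs_triangle_ineq[of k1 "k - k1"] abs_triangle_ineq4[of k k1] abs_triangle_ineq4[of k "k - k1"]
    by simp_all
  ultimately show ?thesis
    by blast
qed

lemma P1_kernel_sq_le:
  assumes "0 \<le> s"
  shows "(P1_kernel r s k k1)^2
         \<le> (4 * 2 powr s)^2 * near_weight (2 * (r - s)) (2 * (2 - s)) k (k - k1)
           + (2 * 2 powr s)^2 * near_weight (2 * (r - s - 1)) (2 * (3 - s)) k k1
           + (2 * 2 powr s)^2 * far_weight (2 * (r - 1)) (2 * (3 - 2 * s)) k k1"
    (is "_ \<le> ?A + ?B + ?C")
proof -
  have nonneg: "0 \<le> ?A" "0 \<le> ?B" "0 \<le> ?C"
    by (simp_all add: near_weight_nonneg far_weight_nonneg)
  show ?thesis
  proof (cases "k = 0")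
    case True
    then show ?thesis using nonneg by (simp add: P1_kernel_def)
  next
    case k: False
    consider (high_low) "\<bar>k - k1\<bar> \<le> \<bar>k1\<bar>" "\<bar>k1\<bar> \<le> 2 * \<bar>k\<bar>"
      | (low_high) "\<bar>k1\<bar> < \<bar>k - k1\<bar>" "\<bar>k - k1\<bar> \<le> 2 * \<bar>k\<bar>"
      | (high_high) "\<bar>k\<bar> < \<bar>k1\<bar>" "\<bar>k1\<bar> \<le> 2 * \<bar>k - k1\<bar>"
      using frequency_trichotomy[of k k1] by blast
    then show ?thesis
    proof cases
      case high_low
      then have "(P1_kernel r s k k1)^2 \<le> ?A"
        using power2_le_powr_mult[OF P1_kernel_nonneg P1_kernel_le_high_low[where r = r, OF k assms high_low]]
        by (simp add: near_weight_def mult.assoc)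
      then show ?thesis using nonneg by linarith
    next
      case low_high
      then have "(P1_kernel r s k k1)^2 \<le> ?B"
        using power2_le_powr_mult[OF P1_kernel_nonneg P1_kernel_le_low_high[where r = r, OF k assms low_high]]
        by (simp add: near_weight_def mult.assoc)
      then show ?thesis using nonneg by linarith
    next
      case high_high
      then have "(P1_kernel r s k k1)^2 \<le> ?C"
        using power2_le_powr_mult[OF P1_kernel_nonneg P1_kernel_le_high_high[where r = r, OF k assms high_high]]
        by (simp add: far_weight_def mult.assoc)
      then show ?thesis using nonneg by linarith
    qed
  qed
qed

text \<open>At \<open>s = 5/2\<close> the first sum diverges logarithmically; this is why \<open>p(5/2) = 0+\<close>.\<close>
lemma P1_kernel_sq_sum_bounded:
  assumes "r \<le> s" "2 * r + 5 \<le> 4 * s" "7/4 < s" "s \<noteq> 5/2"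
  obtains B where "\<And>k F. finite F \<Longrightarrow> (\<Sum>k1\<in>F. (P1_kernel r s k k1)^2) \<le> B"
proof -
  have c1: "(-1 < 2 * (2 - s) \<and> 2 * (r - s) + 1 + 2 * (2 - s) \<le> 0) \<or> (2 * (2 - s) < -1 \<and> 2 * (r - s) \<le> 0)
        \<or> (2 * (2 - s) \<le> 0 \<and> 2 * (r - s) + 1 \<le> 0)"
    using assms by (cases "s < 5/2") auto
  obtain B1 where B1: "\<And>k G. finite G \<Longrightarrow> (\<Sum>j\<in>G. near_weight (2 * (r - s)) (2 * (2 - s)) k j) \<le> B1"
    using sum_near_weight_bounded[OF c1] by blast
  have c2: "(-1 < 2 * (3 - s) \<and> 2 * (r - s - 1) + 1 + 2 * (3 - s) \<le> 0) \<or> (2 * (3 - s) < -1 \<and> 2 * (r - s - 1) \<le> 0)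
        \<or> (2 * (3 - s) \<le> 0 \<and> 2 * (r - s - 1) + 1 \<le> 0)"
    using assms by (cases "s < 3") auto
  obtain B2 where B2: "\<And>k G. finite G \<Longrightarrow> (\<Sum>j\<in>G. near_weight (2 * (r - s - 1)) (2 * (3 - s)) k j) \<le> B2"
    using sum_near_weight_bounded[OF c2] by blast
  obtain B3 where B3: "\<And>k G. finite G \<Longrightarrow> (\<Sum>j\<in>G. far_weight (2 * (r - 1)) (2 * (3 - 2 * s)) k j) \<le> B3"
    using sum_far_weight_bounded[of "2 * (3 - 2 * s)" "2 * (r - 1)"] assms by auto
  show ?thesis
  proof (rule that)
    fix k :: int and F :: "int set"
    assume F: "finite F"
    let ?A = "\<lambda>j. near_weight (2 * (r - s)) (2 * (2 - s)) k j"
    let ?B = "\<lambda>j. near_weight (2 * (r - s - 1)) (2 * (3 - s)) k j"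
    let ?C = "\<lambda>j. far_weight (2 * (r - 1)) (2 * (3 - 2 * s)) k j"
    have "(\<Sum>k1\<in>F. (P1_kernel r s k k1)^2)
          \<le> (\<Sum>k1\<in>F. (4 * 2 powr s)^2 * ?A (k - k1) + (2 * 2 powr s)^2 * ?B k1 + (2 * 2 powr s)^2 * ?C k1)"
      using assms by (intro sum_mono P1_kernel_sq_le) auto
    also have "\<dots> = (4 * 2 powr s)^2 * (\<Sum>k1\<in>F. ?A (k - k1))
                    + (2 * 2 powr s)^2 * (\<Sum>k1\<in>F. ?B k1) + (2 * 2 powr s)^2 * (\<Sum>k1\<in>F. ?C k1)"
      by (simp add: sum.distrib sum_distrib_left)
    also have "(\<Sum>k1\<in>F. ?A (k - k1)) = (\<Sum>j\<in>(\<lambda>k1. k - k1) ` F. ?A j)"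
      by (subst sum.reindex) (auto simp: inj_on_def)
    also have "(4 * 2 powr s)^2 * \<dots> + (2 * 2 powr s)^2 * (\<Sum>k1\<in>F. ?B k1) + (2 * 2 powr s)^2 * (\<Sum>k1\<in>F. ?C k1)
               \<le> (4 * 2 powr s)^2 * B1 + (2 * 2 powr s)^2 * B2 + (2 * 2 powr s)^2 * B3"
      using B1 B2 B3 F by (intro add_mono mult_left_mono) auto
    finally show "(\<Sum>k1\<in>F. (P1_kernel r s k k1)^2)
                  \<le> (4 * 2 powr s)^2 * B1 + (2 * 2 powr s)^2 * B2 + (2 * 2 powr s)^2 * B3" .
  qed
qed

section \<open>Nonnegative families\<close>

lemma nonneg_bounded_summable_on:
  fixes f :: "'a \<Rightarrow> real"
  assumes "\<And>x. 0 \<le> f x" "\<And>F. finite F \<Longrightarrow> sum f F \<le> B"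
  shows "f summable_on UNIV" and "infsum f UNIV \<le> B"
proof -
  show summable: "f summable_on UNIV"
    using assms by (intro nonneg_bdd_above_summable_on bdd_aboveI2) auto
  show "infsum f UNIV \<le> B"
    using assms by (intro infsum_le_finite_sums[OF summable]) auto
qed

lemma has_sum_sum:
  fixes f :: "'i \<Rightarrow> 'a \<Rightarrow> 'b::topological_comm_monoid_add"
  assumes "finite I" "\<And>i. i \<in> I \<Longrightarrow> (f i has_sum S i) A"
  shows "((\<lambda>x. \<Sum>i\<in>I. f i x) has_sum (\<Sum>i\<in>I. S i)) A"
  using assms by (induction I rule: finite_induct) (auto intro: has_sum_add)

lemma infsum_Cauchy_Schwarz:
  fixes x y :: "'a \<Rightarrow> real"
  assumes "\<And>i. 0 \<le> x i" "\<And>i. 0 \<le> y i"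
    and x2: "(\<lambda>i. (x i)^2) summable_on UNIV" and y2: "(\<lambda>i. (y i)^2) summable_on UNIV"
  shows "(\<lambda>i. x i * y i) summable_on UNIV"
    and "(infsum (\<lambda>i. x i * y i) UNIV)^2 \<le> infsum (\<lambda>i. (x i)^2) UNIV * infsum (\<lambda>i. (y i)^2) UNIV"
proof -
  define X Y where "X = infsum (\<lambda>i. (x i)^2) UNIV" and "Y = infsum (\<lambda>i. (y i)^2) UNIV"
  have XY: "0 \<le> X" "0 \<le> Y"
    unfolding X_def Y_def by (auto intro: infsum_nonneg)
  have xy: "0 \<le> x i * y i" for i
    using assms by simp
  have "(\<Sum>i\<in>F. x i * y i) \<le> sqrt (X * Y)" if "finite F" for F
  proof -
    have "(\<Sum>i\<in>F. x i * y i)^2 \<le> (\<Sum>i\<in>F. (x i)^2) * (\<Sum>i\<in>F. (y i)^2)"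
      by (rule Cauchy_Schwarz_ineq_sum)
    also have "\<dots> \<le> X * Y"
      unfolding X_def Y_def using that
      by (intro mult_mono finite_sum_le_infsum x2 y2) (auto intro: sum_nonneg infsum_nonneg)
    finally show ?thesis by (simp add: real_le_rsqrt)
  qed
  note bounded = nonneg_bounded_summable_on[of "\<lambda>i. x i * y i", OF xy this]
  show "(\<lambda>i. x i * y i) summable_on UNIV"
    by (rule bounded(1))
  have "(infsum (\<lambda>i. x i * y i) UNIV)^2 \<le> (sqrt (X * Y))^2"
    using bounded(2) xy by (intro power_mono infsum_nonneg) auto
  then show "(infsum (\<lambda>i. x i * y i) UNIV)^2 \<le> X * Y"
    using XY by simp
qed

lemma convolution_infsum_le:
  fixes A :: "'a::ab_group_add \<Rightarrow> real"
  assumes nonneg: "\<And>j. 0 \<le> A j" and summable: "A summable_on UNIV"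
  shows "(\<lambda>j. A j * A (k - j)) summable_on UNIV"
    and "(\<lambda>k. infsum (\<lambda>j. A j * A (k - j)) UNIV) summable_on UNIV"
    and "infsum (\<lambda>k. infsum (\<lambda>j. A j * A (k - j)) UNIV) UNIV \<le> (infsum A UNIV)^2"
proof -
  define S where "S = infsum A UNIV"
  have sum_le: "sum A F \<le> S" if "finite F" for F
    unfolding S_def using that nonneg by (intro finite_sum_le_infsum summable) auto
  have A_le: "A j \<le> S" for j
    using sum_le[of "{j}"] by simp
  have conv: "(\<lambda>j. A j * A (k - j)) summable_on UNIV" for k
    using nonneg A_le
    by (intro summable_on_comparison_test[OF summable_on_cmult_left[OF summable, of S]])
       (auto intro: mult_left_mono)
  then show "(\<lambda>j. A j * A (k - j)) summable_on UNIV" .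
  have "(\<Sum>k\<in>F. infsum (\<lambda>j. A j * A (k - j)) UNIV) \<le> S^2" if F: "finite F" for F
  proof -
    have has_sum: "((\<lambda>j. \<Sum>k\<in>F. A j * A (k - j)) has_sum (\<Sum>k\<in>F. infsum (\<lambda>j. A j * A (k - j)) UNIV)) UNIV"
      using F conv by (intro has_sum_sum) auto
    have inner: "(\<Sum>k\<in>F. A j * A (k - j)) \<le> A j * S" for j
    proof -
      have "(\<Sum>k\<in>F. A (k - j)) = sum A ((\<lambda>k. k - j) ` F)"
        by (subst sum.reindex) (auto simp: inj_on_def)
      also have "\<dots> \<le> S"
        using F by (intro sum_le) auto
      finally show ?thesis
        using nonneg[of j] by (simp add: sum_distrib_left[symmetric] mult_left_mono)
    qed
    have "(\<Sum>k\<in>F. infsum (\<lambda>j. A j * A (k - j)) UNIV) = infsum (\<lambda>j. \<Sum>k\<in>F. A j * A (k - j)) UNIV"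
      using has_sum by (simp add: infsumI)
    also have "\<dots> \<le> infsum (\<lambda>j. A j * S) UNIV"
      using has_sum inner summable_on_cmult_left[OF summable]
      by (intro infsum_mono) (auto dest: has_sum_imp_summable)
    also have "\<dots> = S^2"
      unfolding S_def by (simp add: infsum_cmult_left' power2_eq_square)
    finally show ?thesis .
  qed
  then have "(\<lambda>k. infsum (\<lambda>j. A j * A (k - j)) UNIV) summable_on UNIV \<and>
             infsum (\<lambda>k. infsum (\<lambda>j. A j * A (k - j)) UNIV) UNIV \<le> S^2"
    using nonneg by (intro conjI nonneg_bounded_summable_on infsum_nonneg mult_nonneg_nonneg) auto
  then show "(\<lambda>k. infsum (\<lambda>j. A j * A (k - j)) UNIV) summable_on UNIV"
    and "infsum (\<lambda>k. infsum (\<lambda>j. A j * A (k - j)) UNIV) UNIV \<le> (infsum A UNIV)^2"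
    unfolding S_def by auto
qed

text \<open>Cauchy--Schwarz in \<open>j\<close>, then Young's inequality for the convolution of \<open>b^2\<close> with itself.\<close>
lemma kernel_convolution_bound:
  fixes K :: "'a::ab_group_add \<Rightarrow> 'a \<Rightarrow> real" and b :: "'a \<Rightarrow> real"
  assumes K_nonneg: "\<And>k j. 0 \<le> K k j" and b_nonneg: "\<And>j. 0 \<le> b j"
    and b2: "(\<lambda>j. (b j)^2) summable_on UNIV"
    and K2: "\<And>k F. finite F \<Longrightarrow> (\<Sum>j\<in>F. (K k j)^2) \<le> B"
  shows "(\<lambda>j. K k j * (b j * b (k - j))) summable_on UNIV"
    and "(\<lambda>k. (infsum (\<lambda>j. K k j * (b j * b (k - j))) UNIV)^2) summable_on UNIV"
    and "infsum (\<lambda>k. (infsum (\<lambda>j. K k j * (b j * b (k - j))) UNIV)^2) UNIV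
           \<le> B * (infsum (\<lambda>j. (b j)^2) UNIV)^2"
proof -
  let ?A = "\<lambda>j. (b j)^2"
  let ?conv = "\<lambda>k. infsum (\<lambda>j. ?A j * ?A (k - j)) UNIV"
  note conv = convolution_infsum_le[of ?A, OF zero_le_power2 b2]
  have K_row: "(\<lambda>j. (K k j)^2) summable_on UNIV" "infsum (\<lambda>j. (K k j)^2) UNIV \<le> B" for k
    using nonneg_bounded_summable_on[of "\<lambda>j. (K k j)^2", OF zero_le_power2 K2] by auto
  have bb: "(\<lambda>j. (b j * b (k - j))^2) = (\<lambda>j. ?A j * ?A (k - j))" for k
    by (simp add: power_mult_distrib)
  show row: "(\<lambda>j. K k j * (b j * b (k - j))) summable_on UNIV" for k
    using infsum_Cauchy_Schwarz(1)[of "K k" "\<lambda>j. b j * b (k - j)"] K_nonneg b_nonneg K_row(1) conv(1)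
    by (simp add: bb)
  have pointwise: "(infsum (\<lambda>j. K k j * (b j * b (k - j))) UNIV)^2 \<le> B * ?conv k" for k
  proof -
    have "(infsum (\<lambda>j. K k j * (b j * b (k - j))) UNIV)^2 \<le> infsum (\<lambda>j. (K k j)^2) UNIV * ?conv k"
      using infsum_Cauchy_Schwarz(2)[of "K k" "\<lambda>j. b j * b (k - j)"] K_nonneg b_nonneg K_row(1) conv(1)
      by (simp add: bb)
    also have "\<dots> \<le> B * ?conv k"
      using K_row(2) by (intro mult_right_mono infsum_nonneg) auto
    finally show ?thesis .
  qed
  have scaled: "(\<lambda>k. B * ?conv k) summable_on UNIV"
    using conv(2) by (rule summable_on_cmult_right)
  show summable: "(\<lambda>k. (infsum (\<lambda>j. K k j * (b j * b (k - j))) UNIV)^2) summable_on UNIV"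
    using pointwise by (intro summable_on_comparison_test[OF scaled]) auto
  have "infsum (\<lambda>k. (infsum (\<lambda>j. K k j * (b j * b (k - j))) UNIV)^2) UNIV \<le> infsum (\<lambda>k. B * ?conv k) UNIV"
    using pointwise by (intro infsum_mono summable scaled)
  also have "\<dots> = B * infsum ?conv UNIV"
    by (rule infsum_cmult_right')
  also have "\<dots> \<le> B * (infsum ?A UNIV)^2"
    using conv(3) K_row(2)[of 0] infsum_nonneg[of UNIV "\<lambda>j. (K 0 j)^2"]
    by (intro mult_left_mono) auto
  finally show "infsum (\<lambda>k. (infsum (\<lambda>j. K k j * (b j * b (k - j))) UNIV)^2) UNIV
                \<le> B * (infsum ?A UNIV)^2" .
qed

section \<open>Fourier coefficients of \<open>P\<^sub>1\<^sup>\<tau>\<close>\<close>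

definition P1_term :: "real \<Rightarrow> (int \<Rightarrow> complex) \<Rightarrow> int \<Rightarrow> int \<Rightarrow> complex" where
  "P1_term \<tau> g k k1 =
     complex_of_real ((of_int k1)^2 / (of_int k)^2) *
     integral {0..\<tau>} (\<lambda>s::real.
        (exp (- 2 * \<i> * complex_of_real s * of_int ((k - k1)^2)) - 1) *
        (exp (- 2 * \<i> * complex_of_real s * of_int (k * k1)) - 1)) *
     g k1 * g (k - k1)"

lemma P1_coeff_eq_infsum:
  assumes "k \<noteq> 0"
  shows "P1_coeff \<tau> g k = infsum (P1_term \<tau> g k) UNIV"
proof -
  have "P1_coeff \<tau> g k = (if k = 0 then 0 else infsum (P1_term \<tau> g k) UNIV)"
    unfolding P1_coeff_def P1_term_def by (rule refl)
  with assms show ?thesis by simp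
qed

lemma norm_P1_term_le:
  assumes "0 \<le> \<tau>"
  shows "norm (P1_term \<tau> g k k1) \<le> 4 * \<tau>^2 * multiplier k k1 * (norm (g k1) * norm (g (k - k1)))"
proof -
  let ?I = "integral {0..\<tau>} (\<lambda>s::real.
              (exp (- 2 * \<i> * complex_of_real s * of_int ((k - k1)^2)) - 1) *
              (exp (- 2 * \<i> * complex_of_real s * of_int (k * k1)) - 1))"
  have I: "norm ?I \<le> 4 * \<tau>^2 * min \<bar>real_of_int ((k - k1)^2)\<bar> \<bar>real_of_int (k * k1)\<bar>"
    using phase_integral_bound[OF assms, of "of_int ((k - k1)^2)" "of_int (k * k1)"]
    by (simp only: of_real_of_int_eq)
  have q: "0 \<le> (real_of_int k1)^2 / (real_of_int k)^2"
    by simp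
  have "norm (P1_term \<tau> g k k1) = ((of_int k1)^2 / (of_int k)^2 * norm ?I) * (norm (g k1) * norm (g (k - k1)))"
    by (simp only: P1_term_def norm_mult norm_of_real abs_of_nonneg[OF q] mult.assoc)
  also have "\<dots> \<le> ((of_int k1)^2 / (of_int k)^2 * (4 * \<tau>^2 * min \<bar>real_of_int ((k - k1)^2)\<bar> \<bar>real_of_int (k * k1)\<bar>))
                   * (norm (g k1) * norm (g (k - k1)))"
    using I q by (intro mult_right_mono mult_left_mono) auto
  also have "\<dots> = 4 * \<tau>^2 * multiplier k k1 * (norm (g k1) * norm (g (k - k1)))"
    by (simp add: multiplier_def)
  finally show ?thesis .
qed

definition sob_weighted :: "real \<Rightarrow> (int \<Rightarrow> complex) \<Rightarrow> int \<Rightarrow> real" where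
  "sob_weighted s g j = (1 + (of_int j)^2) powr (s / 2) * norm (g j)"

lemma sob_weighted_nonneg: "0 \<le> sob_weighted s g j"
  by (simp add: sob_weighted_def)

lemma sob_weighted_sq: "(sob_weighted s g j)^2 = (1 + (of_int j)^2) powr s * (norm (g j))^2"
  by (simp add: sob_weighted_def power_mult_distrib power2_eq_square powr_add[symmetric])

lemma power2_powr: "0 \<le> x \<Longrightarrow> (x^2) powr t = x powr (2 * t)"
  for x t :: real
  using powr_powr[of x 2 t] by simp

lemma bracket_powr_mult_norm_le:
  assumes "0 \<le> s"
  shows "bracket j powr s * norm (g j) \<le> 2 powr (s / 2) * sob_weighted s g j"
proof -
  define q where "q = 1 + (real_of_int j)^2"
  have "bracket j ^ 2 \<le> 2 * q"
    using sum_squares_bound[of "\<bar>real_of_int j\<bar>" 1]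
    by (simp add: bracket_def q_def power2_eq_square algebra_simps)
  then have "(bracket j ^ 2) powr (s / 2) \<le> (2 * q) powr (s / 2)"
    using assms by (intro powr_mono2) auto
  moreover have "(bracket j ^ 2) powr (s / 2) = bracket j powr s"
    by (simp add: power2_powr)
  moreover have "(2 * q) powr (s / 2) = 2 powr (s / 2) * q powr (s / 2)"
    by (rule powr_mult)
  ultimately show ?thesis
    by (simp add: sob_weighted_def q_def mult_right_mono mult.assoc[symmetric])
qed

lemma one_plus_sq_powr_le_bracket:
  assumes "0 \<le> r"
  shows "(1 + (of_int k)^2) powr r \<le> (bracket k powr r)^2"
proof -
  have "1 + (real_of_int k)^2 \<le> bracket k ^ 2"
    by (simp add: bracket_def power2_eq_square algebra_simps)
  then have "(1 + (real_of_int k)^2) powr r \<le> (bracket k ^ 2) powr r"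
    using assms by (intro powr_mono2) auto
  also have "\<dots> = (bracket k powr r)^2"
    by (simp add: power2_powr powr_power)
  finally show ?thesis .
qed

lemma bracket_powr_norm_P1_term_le:
  assumes "0 \<le> \<tau>" "0 \<le> s"
  shows "bracket k powr r * norm (P1_term \<tau> g k k1)
         \<le> 4 * 2 powr s * \<tau>^2 * (P1_kernel r s k k1 * (sob_weighted s g k1 * sob_weighted s g (k - k1)))"
proof -
  have "bracket k powr r * norm (P1_term \<tau> g k k1)
        \<le> bracket k powr r * (4 * \<tau>^2 * multiplier k k1 * (norm (g k1) * norm (g (k - k1))))"
    using assms by (intro mult_left_mono norm_P1_term_le) auto
  also have "\<dots> = 4 * \<tau>^2 * P1_kernel r s k k1
                  * ((bracket k1 powr s * norm (g k1)) * (bracket (k - k1) powr s * norm (g (k - k1))))"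
    by (simp add: P1_kernel_def)
  also have "\<dots> \<le> 4 * \<tau>^2 * P1_kernel r s k k1
                  * ((2 powr (s / 2) * sob_weighted s g k1) * (2 powr (s / 2) * sob_weighted s g (k - k1)))"
  proof -
    have "(bracket k1 powr s * norm (g k1)) * (bracket (k - k1) powr s * norm (g (k - k1)))
          \<le> (2 powr (s / 2) * sob_weighted s g k1) * (2 powr (s / 2) * sob_weighted s g (k - k1))"
      using assms(2) by (intro mult_mono[OF bracket_powr_mult_norm_le bracket_powr_mult_norm_le])
        (auto simp: sob_weighted_nonneg)
    then show ?thesis
      using assms(1) by (intro mult_left_mono) (auto simp: P1_kernel_nonneg)
  qed
  also have "\<dots> = 4 * 2 powr s * \<tau>^2 * (P1_kernel r s k k1 * (sob_weighted s g k1 * sob_weighted s g (k - k1)))"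
    by (simp add: powr_add[symmetric] mult_ac)
  finally show ?thesis .
qed

lemma bracket_powr_norm_P1_coeff_le:
  assumes "0 \<le> \<tau>" "0 \<le> s"
    and summable: "(\<lambda>k1. P1_kernel r s k k1 * (sob_weighted s g k1 * sob_weighted s g (k - k1))) summable_on UNIV"
  shows "bracket k powr r * norm (P1_coeff \<tau> g k)
         \<le> 4 * 2 powr s * \<tau>^2 * infsum (\<lambda>k1. P1_kernel r s k k1 * (sob_weighted s g k1 * sob_weighted s g (k - k1))) UNIV"
proof -
  let ?X = "\<lambda>k1. P1_kernel r s k k1 * (sob_weighted s g k1 * sob_weighted s g (k - k1))"
  let ?c = "4 * 2 powr s * \<tau>^2 / bracket k powr r"
  have term_le: "norm (P1_term \<tau> g k k1) \<le> ?c * ?X k1" for k1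
    using bracket_powr_norm_P1_term_le[OF assms(1,2), of k r g k1] by (simp add: field_simps)
  have scaled: "(\<lambda>k1. ?c * ?X k1) summable_on UNIV"
    using summable by (rule summable_on_cmult_right)
  have terms: "(\<lambda>k1. norm (P1_term \<tau> g k k1)) summable_on UNIV"
    using term_le by (intro summable_on_comparison_test[OF scaled]) auto
  have "norm (P1_coeff \<tau> g k) \<le> infsum (\<lambda>k1. norm (P1_term \<tau> g k k1)) UNIV"
  proof (cases "k = 0")
    case True
    then show ?thesis by (simp add: P1_coeff_def infsum_nonneg)
  next
    case False
    then show ?thesis
      using norm_infsum_bound[OF terms] by (simp add: P1_coeff_eq_infsum)
  qed
  also have "\<dots> \<le> infsum (\<lambda>k1. ?c * ?X k1) UNIV"
    using term_le by (intro infsum_mono terms scaled)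
  also have "\<dots> = ?c * infsum ?X UNIV"
    by (rule infsum_cmult_right')
  finally show ?thesis
    by (simp add: field_simps)
qed

lemma P1_coeff_sob_bound:
  assumes "0 \<le> r" "0 \<le> s" "0 \<le> \<tau>" "in_H s g"
    and kernel: "\<And>k F. finite F \<Longrightarrow> (\<Sum>k1\<in>F. (P1_kernel r s k k1)^2) \<le> B"
  shows "in_H r (P1_coeff \<tau> g)"
    and "sob_sq r (P1_coeff \<tau> g) \<le> (4 * 2 powr s * \<tau>^2)^2 * B * (sob_sq s g)^2"
proof -
  let ?b = "sob_weighted s g"
  let ?c = "4 * 2 powr s * \<tau>^2"
  define X where "X k = infsum (\<lambda>k1. P1_kernel r s k k1 * (?b k1 * ?b (k - k1))) UNIV" for k
  have b2: "(\<lambda>j. (?b j)^2) summable_on UNIV" and sob: "sob_sq s g = infsum (\<lambda>j. (?b j)^2) UNIV"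
    using assms(4) by (simp_all add: in_H_def sob_sq_def sob_weighted_sq)
  note conv = kernel_convolution_bound[of "P1_kernel r s" ?b, OF P1_kernel_nonneg sob_weighted_nonneg b2 kernel]
  have pointwise: "(1 + (of_int k)^2) powr r * (norm (P1_coeff \<tau> g k))^2 \<le> ?c^2 * (X k)^2" for k
  proof -
    have "(1 + (of_int k)^2) powr r * (norm (P1_coeff \<tau> g k))^2
          \<le> (bracket k powr r)^2 * (norm (P1_coeff \<tau> g k))^2"
      using assms(1) by (intro mult_right_mono one_plus_sq_powr_le_bracket) auto
    also have "\<dots> = (bracket k powr r * norm (P1_coeff \<tau> g k))^2"
      by (simp add: power_mult_distrib)
    also have "\<dots> \<le> (?c * X k)^2"
      unfolding X_def using assms(2,3) conv(1)
      by (intro power_mono bracket_powr_norm_P1_coeff_le) auto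
    finally show ?thesis
      by (simp add: power_mult_distrib)
  qed
  have scaled: "(\<lambda>k. ?c^2 * (X k)^2) summable_on UNIV"
    using conv(2) unfolding X_def by (rule summable_on_cmult_right)
  have summable: "(\<lambda>k. (1 + (of_int k)^2) powr r * (norm (P1_coeff \<tau> g k))^2) summable_on UNIV"
    using pointwise by (intro summable_on_comparison_test[OF scaled]) auto
  then show "in_H r (P1_coeff \<tau> g)"
    by (simp add: in_H_def)
  have "sob_sq r (P1_coeff \<tau> g) \<le> infsum (\<lambda>k. ?c^2 * (X k)^2) UNIV"
    unfolding sob_sq_def using pointwise by (intro infsum_mono summable scaled)
  also have "\<dots> = ?c^2 * infsum (\<lambda>k. (X k)^2) UNIV"
    by (rule infsum_cmult_right')
  also have "\<dots> \<le> ?c^2 * (B * (sob_sq s g)^2)"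
    unfolding sob X_def using conv(3) by (intro mult_left_mono) auto
  finally show "sob_sq r (P1_coeff \<tau> g) \<le> ?c^2 * B * (sob_sq s g)^2"
    by (simp add: mult.assoc)
qed

lemma fourier_coeff_cnj: "fourier_coeff (\<lambda>x. cnj (f x)) k = cnj (fourier_coeff f (- k))"
proof -
  have "indicator {-pi..pi} x *\<^sub>R (cnj (f x) * exp (- \<i> * of_int k * complex_of_real x))
        = cnj (indicator {-pi..pi} x *\<^sub>R (f x * exp (- \<i> * of_int (- k) * complex_of_real x)))" for x
    by (simp add: exp_cnj)
  then show ?thesis
    unfolding fourier_coeff_def set_lebesgue_integral_def
    by (simp only: Bochner_Integration.integral_cnj) simp
qed

lemma sob_summand_fourier_coeff_cnj:
  "(\<lambda>k. (1 + (of_int k)^2) powr s * (norm (fourier_coeff (\<lambda>x. cnj (f x)) k))^2)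
   = (\<lambda>k. (\<lambda>k. (1 + (of_int k)^2) powr s * (norm (fourier_coeff f k))^2) (- k))"
  by (simp add: fourier_coeff_cnj)

lemma in_H_fourier_coeff_cnj: "in_H s (fourier_coeff (\<lambda>x. cnj (f x))) \<longleftrightarrow> in_H s (fourier_coeff f)"
  unfolding in_H_def sob_summand_fourier_coeff_cnj
  by (rule summable_on_reindex_bij_betw[OF bij_uminus])

lemma sob_sq_fourier_coeff_cnj: "sob_sq s (fourier_coeff (\<lambda>x. cnj (f x))) = sob_sq s (fourier_coeff f)"
  unfolding sob_sq_def sob_summand_fourier_coeff_cnj
  by (rule infsum_reindex_bij_betw[OF bij_uminus])

lemma sob_sq_nonneg: "0 \<le> sob_sq s c"
  by (simp add: sob_sq_def infsum_nonneg)

lemma P1_estimate_if: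
  assumes "0 \<le> r" "r \<le> s" "2 * r + 5 \<le> 4 * s" "7/4 < s" "s \<noteq> 5/2"
  shows "P1_estimate r s"
proof -
  obtain B where B: "\<And>k F. finite F \<Longrightarrow> (\<Sum>k1\<in>F. (P1_kernel r s k k1)^2) \<le> B"
    using P1_kernel_sq_sum_bounded[of r s] assms by blast
  have "0 \<le> B"
    using B[of "{}"] by simp
  show ?thesis
    unfolding P1_estimate_def
  proof (intro exI[of _ "4 * 2 powr s * sqrt B"] allI impI conjI)
    fix f :: "real \<Rightarrow> complex" and \<tau> :: real
    assume f: "set_integrable lborel {-pi..pi} f \<and> in_H s (fourier_coeff f) \<and> 0 < \<tau>"
    let ?g = "fourier_coeff (\<lambda>x. cnj (f x))"
    have g: "in_H s ?g"
      using f by (simp add: in_H_fourier_coeff_cnj)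
    have sob_g: "sob_sq s ?g = (sob_norm s (fourier_coeff f))^2" "0 \<le> sob_sq s ?g"
      by (simp_all add: sob_sq_fourier_coeff_cnj sob_norm_def sob_sq_nonneg)
    note bound = P1_coeff_sob_bound[of r s \<tau> ?g B, OF _ _ _ g B]
    show "in_H r (P1_coeff \<tau> ?g)"
      using bound(1) assms f by auto
    have "sob_norm r (P1_coeff \<tau> ?g) \<le> sqrt ((4 * 2 powr s * \<tau>^2)^2 * B * (sob_sq s ?g)^2)"
      unfolding sob_norm_def using bound(2) assms f by (intro real_sqrt_le_mono) auto
    also have "\<dots> = 4 * 2 powr s * sqrt B * \<tau>^2 * sob_sq s ?g"
      using \<open>0 \<le> B\<close> sob_g(2) by (simp add: real_sqrt_mult)
    finally show "sob_norm r (P1_coeff \<tau> ?g) \<le> 4 * 2 powr s * sqrt B * \<tau>^2 * (sob_norm s (fourier_coeff f))^2"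
      by (simp only: sob_g(1))
  qed
qed

lemma p_base_conditions:
  assumes "1 \<le> r" "\<not> p_plus r"
  shows "r \<le> r + p_base r" "2 * r + 5 \<le> 4 * (r + p_base r)" "7/4 < r + p_base r" "r + p_base r \<noteq> 5/2"
  using assms by (auto simp: p_base_def p_plus_def)

lemma p_base_plus_conditions:
  assumes "p_plus r" "0 < \<epsilon>" "\<epsilon> < 1/12"
  shows "1 \<le> r" "r \<le> r + p_base r + \<epsilon>" "2 * r + 5 \<le> 4 * (r + p_base r + \<epsilon>)"
    "7/4 < r + p_base r + \<epsilon>" "r + p_base r + \<epsilon> \<noteq> 5/2"
  using assms by (auto simp: p_base_def p_plus_def)

theorem lemma6:
  fixes r :: real
  assumes "1 \<le> r"
  shows "if p_plus r
         then (\<exists>\<epsilon>0>0. \<forall>\<epsilon>. 0 < \<epsilon> \<and> \<epsilon> < \<epsilon>0 \<longrightarrow> P1_estimate r (r + p_base r + \<epsilon>))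
         else P1_estimate r (r + p_base r)"
proof (cases "p_plus r")
  case True
  have "P1_estimate r (r + p_base r + \<epsilon>)" if "0 < \<epsilon> \<and> \<epsilon> < 1/12" for \<epsilon>
    using p_base_plus_conditions[OF True, of \<epsilon>] that by (intro P1_estimate_if) auto
  then show ?thesis
    using True by (auto intro!: exI[of _ "1/12"])
next
  case False
  then show ?thesis
    using p_base_conditions[OF assms False] assms by (simp add: P1_estimate_if)
qed

end
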